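(* Let $H$ be a binary tree based graph and let $S$ be a guarded set of literals over variables of $\phi_H$. Then $\Pr({\bf EC}(S))=2^{-|S\setminus Fix(S)|}$.
   Context: Sets of literals never contain a variable together with its negation. A rooted tree is extended if none of its leaves has a sibling. A graph $H$ is a binary tree based graph if it is the edge-disjoint union of extended rooted trees $T_1,\dots,T_m$ with roots $t_1,\dots,t_m$ such that every leaf of some $T_i$ is a leaf of exactly two of the trees, and any two trees have at most one common vertex, which is a leaf of both. $T_i,T_j$ are adjacent if they share a leaf $\ell_{i,j}$; $P_{i,j}$ is the path between $t_i$ and $t_j$ in $T_i\cup T_j$. A pseudoedge is a pair $\{t_i,t_j\}$ with $T_i,T_j$ adjacent. $\phi_H$ is the CNF on variables $V(H)$ with a clause $C_{i,j}$ (positive literals of $V(P_{i,j})$) for each pseudoedge; the non-leaf variables of $C_{i,j}$ are its variables other than $\ell_{i,j}$. A set $S$ of literals is guarded from $C_{i,j}$ if (1) $\ell_{i,j}$ does not occur in $S$, or (2) some non-leaf variable of $C_{i,j}$ occurs positively in $S$, or (3) $\ell_{i,j}$ occurs positively in $S$ and all other variables of $C_{i,j}$ occur negatively in $S$; $S$ is guarded if it is guarded from every clause of $\phi_H$. The positive literal $\ell_{i,j}$ is fixed w.r.t. $S$ if $\ell_{i,j}\in S$ and all other variables of $C_{i,j}$ occur negatively in $S$; $Fix(S)$ is the set of fixed literals. ${\bf SAT}(H)$ is the set of satisfying assignments of $\phi_H$; each $S'\in{\bf SAT}(H)$ has probability $(1/2)^{|V(H)\setminus Fix(S')|}$. ${\bf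 EC}(S)=\{S'\in{\bf SAT}(H):S\subseteq S'\}$. *)

theory Defs
  imports Complex_Main
begin

text \<open>A rooted tree on a finite vertex set V with root r is represented by a parent
  function p: every vertex x of V other than r has parent p x in V, p r = r (convention),
  and iterating p from any vertex reaches r (so there are no cycles).\<close>

definition rooted_tree :: "'v set \<Rightarrow> 'v \<Rightarrow> ('v \<Rightarrow> 'v) \<Rightarrow> bool" where
  "rooted_tree V r p \<longleftrightarrow> finite V \<and> r \<in> V \<and> p r = r \<and> (\<forall>x\<in>V. p x \<in> V)
     \<and> (\<forall>x\<in>V. \<exists>k. (p ^^ k) x = r)"

definition tree_edges :: "'v set \<Rightarrow> 'v \<Rightarrow> ('v \<Rightarrow> 'v) \<Rightarrow> 'v set set" where
  "tree_edges V r p = {{x, p x} | x. x \<in> V \<and> x \<noteq> r}"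

definition children :: "'v set \<Rightarrow> 'v \<Rightarrow> ('v \<Rightarrow> 'v) \<Rightarrow> 'v \<Rightarrow> 'v set" where
  "children V r p v = {y \<in> V. y \<noteq> r \<and> p y = v}"

definition tree_leaves :: "'v set \<Rightarrow> 'v \<Rightarrow> ('v \<Rightarrow> 'v) \<Rightarrow> 'v set" where
  "tree_leaves V r p = {x \<in> V. x \<noteq> r \<and> children V r p x = {}}"

definition extended :: "'v set \<Rightarrow> 'v \<Rightarrow> ('v \<Rightarrow> 'v) \<Rightarrow> bool" where
  "extended V r p \<longleftrightarrow> (\<forall>x \<in> tree_leaves V r p. \<forall>y\<in>V. y \<noteq> r \<and> y \<noteq> x \<longrightarrow> p y \<noteq> p x)"

text \<open>Binary tree based graph given by its decomposition into trees T_i (i < m),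
  T_i having vertex set V i, root r i, parent function p i.\<close>
definition btbg :: "nat \<Rightarrow> (nat \<Rightarrow> 'v set) \<Rightarrow> (nat \<Rightarrow> 'v) \<Rightarrow> (nat \<Rightarrow> 'v \<Rightarrow> 'v) \<Rightarrow> bool" where
  "btbg m V r p \<longleftrightarrow>
     (\<forall>i<m. rooted_tree (V i) (r i) (p i) \<and> extended (V i) (r i) (p i))
   \<and> (\<forall>i<m. \<forall>j<m. i \<noteq> j \<longrightarrow> tree_edges (V i) (r i) (p i) \<inter> tree_edges (V j) (r j) (p j) = {})
   \<and> (\<forall>i<m. \<forall>x \<in> tree_leaves (V i) (r i) (p i).
          card {j. j < m \<and> x \<in> tree_leaves (V j) (r j) (p j)} = 2)
   \<and> (\<forall>i<m. \<forall>j<m. i \<noteq> j \<longrightarrow> card (V i \<inter> V j) \<le> 1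
          \<and> V i \<inter> V j \<subseteq> tree_leaves (V i) (r i) (p i) \<inter> tree_leaves (V j) (r j) (p j))"

definition VH :: "nat \<Rightarrow> (nat \<Rightarrow> 'v set) \<Rightarrow> 'v set" where
  "VH m V = (\<Union>i<m. V i)"

definition adjacent :: "nat \<Rightarrow> (nat \<Rightarrow> 'v set) \<Rightarrow> (nat \<Rightarrow> 'v) \<Rightarrow> (nat \<Rightarrow> 'v \<Rightarrow> 'v) \<Rightarrow> nat \<Rightarrow> nat \<Rightarrow> bool" where
  "adjacent m V r p i j \<longleftrightarrow> i < m \<and> j < m \<and> i \<noteq> j \<and>
     tree_leaves (V i) (r i) (p i) \<inter> tree_leaves (V j) (r j) (p j) \<noteq> {}"

definition common_leaf :: "(nat \<Rightarrow> 'v set) \<Rightarrow> nat \<Rightarrow> nat \<Rightarrow> 'v" where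
  "common_leaf V i j = (THE l. l \<in> V i \<inter> V j)"

definition to_root :: "('v \<Rightarrow> 'v) \<Rightarrow> 'v \<Rightarrow> 'v set" where
  "to_root q v = range (\<lambda>k. (q ^^ k) v)"

text \<open>V(P_{i,j}): vertices of the path between t_i and t_j in T_i \<union> T_j; these are the
  variables of clause C_{i,j} (all occurring positively).\<close>
definition clause_vars :: "(nat \<Rightarrow> 'v set) \<Rightarrow> (nat \<Rightarrow> 'v \<Rightarrow> 'v) \<Rightarrow> nat \<Rightarrow> nat \<Rightarrow> 'v set" where
  "clause_vars V p i j = to_root (p i) (common_leaf V i j) \<union> to_root (p j) (common_leaf V i j)"

text \<open>Literals: (x, True) is the positive literal x, (x, False) its negation.\<close>
type_synonym 'v lit = "'v \<times> bool"

definition consistent :: "'v lit set \<Rightarrow> bool" where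
  "consistent S \<longleftrightarrow> (\<forall>x. \<not> ((x, True) \<in> S \<and> (x, False) \<in> S))"

definition occurs :: "'v \<Rightarrow> 'v lit set \<Rightarrow> bool" where
  "occurs x S \<longleftrightarrow> (x, True) \<in> S \<or> (x, False) \<in> S"

definition guarded :: "nat \<Rightarrow> (nat \<Rightarrow> 'v set) \<Rightarrow> (nat \<Rightarrow> 'v) \<Rightarrow> (nat \<Rightarrow> 'v \<Rightarrow> 'v) \<Rightarrow> 'v lit set \<Rightarrow> bool" where
  "guarded m V r p S \<longleftrightarrow> (\<forall>i j. adjacent m V r p i j \<longrightarrow>
     (let l = common_leaf V i j; C = clause_vars V p i j in
        \<not> occurs l S
      \<or> (\<exists>v \<in> C - {l}. (v, True) \<in> S)
      \<or> ((l, True) \<in> S \<and> (\<forall>v \<in> C - {l}. (v, False) \<in> S))))"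

definition Fix :: "nat \<Rightarrow> (nat \<Rightarrow> 'v set) \<Rightarrow> (nat \<Rightarrow> 'v) \<Rightarrow> (nat \<Rightarrow> 'v \<Rightarrow> 'v) \<Rightarrow> 'v lit set \<Rightarrow> 'v lit set" where
  "Fix m V r p S = {(common_leaf V i j, True) | i j. adjacent m V r p i j
      \<and> (common_leaf V i j, True) \<in> S
      \<and> (\<forall>v \<in> clause_vars V p i j - {common_leaf V i j}. (v, False) \<in> S)}"

text \<open>Satisfying assignments of phi_H, as complete consistent sets of literals over V(H).\<close>
definition SAT :: "nat \<Rightarrow> (nat \<Rightarrow> 'v set) \<Rightarrow> (nat \<Rightarrow> 'v) \<Rightarrow> (nat \<Rightarrow> 'v \<Rightarrow> 'v) \<Rightarrow> 'v lit set set" where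
  "SAT m V r p = {S'. consistent S' \<and> fst ` S' = VH m V
      \<and> (\<forall>i j. adjacent m V r p i j \<longrightarrow> (\<exists>v \<in> clause_vars V p i j. (v, True) \<in> S'))}"

definition prob :: "nat \<Rightarrow> (nat \<Rightarrow> 'v set) \<Rightarrow> (nat \<Rightarrow> 'v) \<Rightarrow> (nat \<Rightarrow> 'v \<Rightarrow> 'v) \<Rightarrow> 'v lit set \<Rightarrow> real" where
  "prob m V r p S' = (1/2) ^ card (VH m V - {x. (x, True) \<in> Fix m V r p S'})"

definition EC :: "nat \<Rightarrow> (nat \<Rightarrow> 'v set) \<Rightarrow> (nat \<Rightarrow> 'v) \<Rightarrow> (nat \<Rightarrow> 'v \<Rightarrow> 'v) \<Rightarrow> 'v lit set \<Rightarrow> 'v lit set set" where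
  "EC m V r p S = {S' \<in> SAT m V r p. S \<subseteq> S'}"

definition Pr :: "nat \<Rightarrow> (nat \<Rightarrow> 'v set) \<Rightarrow> (nat \<Rightarrow> 'v) \<Rightarrow> (nat \<Rightarrow> 'v \<Rightarrow> 'v) \<Rightarrow> 'v lit set set \<Rightarrow> real" where
  "Pr m V r p A = (\<Sum>S'\<in>A. prob m V r p S')"

end

theory Submission
  imports Defs
begin

text \<open>Identify a complete assignment with its set \<open>T\<close> of true variables. Every leaf lies in exactly
  two trees, so a clause \<open>C\<^sub>i\<^sub>,\<^sub>j\<close> is determined by its leaf \<open>\<ell> = \<ell>\<^sub>i\<^sub>,\<^sub>j\<close>, and its
  other variables are leaves of no tree. Hence \<open>\<phi>\<^sub>H\<close> consists of one clause \<open>\<ell> \<or> \<Or>K(\<ell>)\<close> per leaf,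
  all \<open>K(\<ell>)\<close> consisting of non-leaf variables, and the weight of an assignment is a product:
  each non-leaf variable contributes \<open>1/2\<close>, each leaf \<open>1/2\<close> if \<open>K(\<ell>)\<close> is satisfied and otherwise
  \<open>1\<close> (the leaf is then fixed). Summing out the leaves and then the non-leaf variables, each literal
  of \<open>S\<close> costs a factor \<open>1/2\<close>, except a fixed leaf literal, which costs nothing. Guardedness says
  precisely that every leaf literal of \<open>S\<close> is of one of these two kinds: either \<open>S\<close> satisfies
  \<open>K(\<ell>)\<close>, or the literal is fixed.\<close>

lemma sum_Pow_prod_bool:
  fixes g :: "'a \<Rightarrow> bool \<Rightarrow> 'b::comm_semiring_1"
  assumes "finite A"
  shows "(\<Sum>T\<in>Pow A. \<Prod>x\<in>A. g x (x \<in> T)) = (\<Prod>x\<in>A. g x True + g x False)"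
proof -
  have "(\<Prod>x\<in>A. g x (x \<in> T)) = (\<Prod>x\<in>T. g x True) * (\<Prod>x\<in>A - T. g x False)"
    if "T \<in> Pow A" for T
  proof -
    have "(\<Prod>x\<in>A. g x (x \<in> T)) = (\<Prod>x\<in>T. g x (x \<in> T)) * (\<Prod>x\<in>A - T. g x (x \<in> T))"
      using that assms by (simp add: prod.subset_diff[of T A] mult.commute)
    also have "\<dots> = (\<Prod>x\<in>T. g x True) * (\<Prod>x\<in>A - T. g x False)"
      by (intro arg_cong2[where f = "(*)"] prod.cong) auto
    finally show ?thesis .
  qed
  then show ?thesis
    by (simp add: prod_add[OF assms])
qed

lemma sum_Pow_Un_disjoint:
  assumes "A \<inter> B = {}"
  shows "(\<Sum>T\<in>Pow (A \<union> B). f T) = (\<Sum>X\<in>Pow A. \<Sum>Y\<in>Pow B. f (X \<union> Y))"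
proof -
  have "bij_betw (\<lambda>(X, Y). X \<union> Y) (Pow A \<times> Pow B) (Pow (A \<union> B))"
    using assms by (intro bij_betw_byWitness[where f' = "\<lambda>T. (T \<inter> A, T \<inter> B)"]) auto
  then have "(\<Sum>T\<in>Pow (A \<union> B). f T) = (\<Sum>(X, Y)\<in>Pow A \<times> Pow B. f (X \<union> Y))"
    by (simp add: sum.reindex_bij_betw[symmetric] case_prod_unfold)
  then show ?thesis
    by (simp add: sum.cartesian_product)
qed

locale leaf_clauses =
  fixes N L :: "'a set" and K :: "'a \<Rightarrow> 'a set" and P Q :: "'a set"
  assumes finite_N: "finite N" and finite_L: "finite L" and N_L_disjoint: "N \<inter> L = {}"
    and K_subset: "l \<in> L \<Longrightarrow> K l \<subseteq> N"
    and P_Q_disjoint: "P \<inter> Q = {}" and P_Q_subset: "P \<union> Q \<subseteq> N \<union> L"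
    and guarded: "l \<in> L \<Longrightarrow> (l \<notin> P \<and> l \<notin> Q) \<or> K l \<inter> P \<noteq> {} \<or> (l \<in> P \<and> K l \<subseteq> Q)"
begin

text \<open>The formula \<open>\<phi>\<^sub>H\<close> in this normal form: \<open>L\<close> are the leaves, \<open>N\<close> the other variables, and
  \<open>P\<close>, \<open>Q\<close> the variables that \<open>S\<close> sets true and false. The admissible \<open>T\<close> are the satisfying
  assignments extending \<open>S\<close>; \<open>forced T\<close> and \<open>fixed_leaves\<close> correspond to \<open>Fix\<close>.\<close>

definition admissible :: "'a set \<Rightarrow> bool" where
  "admissible T \<longleftrightarrow> T \<subseteq> N \<union> L \<and> P \<subseteq> T \<and> Q \<inter> T = {} \<and> (\<forall>l\<in>L. l \<in> T \<or> K l \<inter> T \<noteq> {})"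

definition forced :: "'a set \<Rightarrow> 'a set" where
  "forced T = {l \<in> L. l \<in> T \<and> K l \<inter> T = {}}"

definition fixed_leaves :: "'a set" where
  "fixed_leaves = {l \<in> L. l \<in> P \<and> K l \<subseteq> Q}"

definition compatible :: "'a \<Rightarrow> bool \<Rightarrow> bool" where
  "compatible x b \<longleftrightarrow> (if b then x \<notin> Q else x \<notin> P)"

text \<open>The weight of \<open>T\<close> factorises over the variables, a leaf factor depending on \<open>T\<close> only
  through \<open>A = T \<inter> N\<close>.\<close>

definition node_factor :: "'a \<Rightarrow> bool \<Rightarrow> real" where
  "node_factor x b = of_bool (compatible x b) / 2"

definition leaf_factor :: "'a set \<Rightarrow> 'a \<Rightarrow> bool \<Rightarrow> real" where
  "leaf_factor A l b = of_bool (compatible l b) * (if K l \<inter> A \<noteq> {} then 1/2 else of_bool b)"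

definition factor :: "'a set \<Rightarrow> 'a \<Rightarrow> real" where
  "factor T x = (if x \<in> L then leaf_factor (T \<inter> N) x (x \<in> T) else node_factor x (x \<in> T))"

lemma admissible_weight_eq_prod:
  assumes "T \<subseteq> N \<union> L"
  shows "(if admissible T then (1/2) ^ card (N \<union> L - forced T) else 0) = (\<Prod>x\<in>N \<union> L. factor T x)"
proof (cases "admissible T")
  case True
  have "factor T x = (if x \<in> forced T then 1 else 1/2)" if "x \<in> N \<union> L" for x
  proof -
    have "compatible x (x \<in> T)"
      using True unfolding admissible_def compatible_def by auto
    moreover have "K x \<inter> (T \<inter> N) = K x \<inter> T" if "x \<in> L"
      using K_subset[OF that] by blast
    ultimately show ?thesis
      using True \<open>x \<in> N \<union> L\<close> N_L_disjoint
      unfolding factor_def leaf_factor_def node_factor_def forced_def admissible_def by auto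
  qed
  then have "(\<Prod>x\<in>N \<union> L. factor T x) = (\<Prod>x\<in>N \<union> L. if x \<in> forced T then 1 else 1/2)"
    by (rule prod.cong[OF refl])
  also have "\<dots> = (1/2) ^ card (N \<union> L - forced T)"
    using finite_N finite_L by (simp add: prod.If_cases Diff_eq)
  finally show ?thesis
    using True by simp
next
  case False
  have "admissible T" if "\<forall>x\<in>N \<union> L. compatible x (x \<in> T)" "\<forall>l\<in>L. l \<in> T \<or> K l \<inter> T \<noteq> {}"
  proof -
    have "P \<subseteq> T" "Q \<inter> T = {}"
      using that(1) P_Q_subset unfolding compatible_def by (fastforce split: if_splits)+
    then show ?thesis
      using assms that(2) unfolding admissible_def by blast
  qed
  then consider x where "x \<in> N \<union> L" "\<not> compatible x (x \<in> T)"
    | l where "l \<in> L" "l \<notin> T" "K l \<inter> T = {}"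
    using False by blast
  then have "\<exists>x\<in>N \<union> L. factor T x = 0"
  proof cases
    case 1
    then show ?thesis
      unfolding factor_def leaf_factor_def node_factor_def by auto
  next
    case 2
    then show ?thesis
      unfolding factor_def leaf_factor_def by (intro bexI[of _ l]) auto
  qed
  then show ?thesis
    using False finite_N finite_L by simp
qed

lemma prod_factor_Un:
  assumes "A \<subseteq> N" "B \<subseteq> L"
  shows "(\<Prod>x\<in>N \<union> L. factor (A \<union> B) x)
    = (\<Prod>x\<in>N. node_factor x (x \<in> A)) * (\<Prod>l\<in>L. leaf_factor A l (l \<in> B))"
proof -
  have "(\<Prod>x\<in>N \<union> L. factor (A \<union> B) x) = (\<Prod>x\<in>N. factor (A \<union> B) x) * (\<Prod>l\<in>L. factor (A \<union> B) l)"
    using finite_N finite_L N_L_disjoint by (rule prod.union_disjoint)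
  also have "\<dots> = (\<Prod>x\<in>N. node_factor x (x \<in> A)) * (\<Prod>l\<in>L. leaf_factor A l (l \<in> B))"
  proof -
    have "(A \<union> B) \<inter> N = A" and "\<And>x. x \<in> N \<Longrightarrow> x \<in> A \<union> B \<longleftrightarrow> x \<in> A"
      and "\<And>l. l \<in> L \<Longrightarrow> l \<in> A \<union> B \<longleftrightarrow> l \<in> B"
      using assms N_L_disjoint by blast+
    then show ?thesis
      using N_L_disjoint unfolding factor_def
      by (intro arg_cong2[where f = "(*)"] prod.cong) auto
  qed
  finally show ?thesis .
qed

lemma node_factor_nonzero:
  assumes "A \<subseteq> N" "(\<Prod>x\<in>N. node_factor x (x \<in> A)) \<noteq> 0"
  shows "P \<inter> N \<subseteq> A" "Q \<inter> A = {}"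
  using assms finite_N unfolding node_factor_def compatible_def by (auto split: if_splits)

lemma node_factor_sum:
  "x \<in> N \<Longrightarrow> node_factor x True + node_factor x False = (if x \<in> P \<union> Q - fixed_leaves then 1/2 else 1)"
  using P_Q_disjoint N_L_disjoint unfolding node_factor_def compatible_def fixed_leaves_def by auto

lemma leaf_factor_sum:
  assumes "l \<in> L" "A \<subseteq> N" "P \<inter> N \<subseteq> A" "Q \<inter> A = {}"
  shows "leaf_factor A l True + leaf_factor A l False = (if l \<in> P \<union> Q - fixed_leaves then 1/2 else 1)"
  using guarded[OF assms(1)] K_subset[OF assms(1)] assms P_Q_disjoint
  unfolding leaf_factor_def compatible_def fixed_leaves_def by auto

theorem sum_admissible_weights:
  "(\<Sum>T | admissible T. (1/2::real) ^ card (N \<union> L - forced T)) = (1/2) ^ card (P \<union> Q - fixed_leaves)"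
proof -
  define e where "e x = (if x \<in> P \<union> Q - fixed_leaves then 1/2 else 1 :: real)" for x
  have fin: "finite (N \<union> L)"
    using finite_N finite_L by simp
  have "(\<Sum>T | admissible T. (1/2) ^ card (N \<union> L - forced T))
      = (\<Sum>T\<in>Pow (N \<union> L). if admissible T then (1/2) ^ card (N \<union> L - forced T) else 0)"
    using fin by (simp add: sum.inter_filter[symmetric] admissible_def Collect_conj_eq)
  also have "\<dots> = (\<Sum>A\<in>Pow N. \<Sum>B\<in>Pow L. \<Prod>x\<in>N \<union> L. factor (A \<union> B) x)"
    by (simp add: admissible_weight_eq_prod sum_Pow_Un_disjoint[OF N_L_disjoint] Un_mono)
  also have "\<dots> = (\<Sum>A\<in>Pow N. (\<Prod>x\<in>N. node_factor x (x \<in> A)) * (\<Prod>l\<in>L. leaf_factor A l True + leaf_factor A l False))"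
    by (simp add: prod_factor_Un sum_distrib_left[symmetric] sum_Pow_prod_bool[OF finite_L])
  also have "\<dots> = (\<Sum>A\<in>Pow N. (\<Prod>x\<in>N. node_factor x (x \<in> A)) * (\<Prod>l\<in>L. e l))"
  proof (rule sum.cong[OF refl])
    fix A assume "A \<in> Pow N"
    show "(\<Prod>x\<in>N. node_factor x (x \<in> A)) * (\<Prod>l\<in>L. leaf_factor A l True + leaf_factor A l False)
      = (\<Prod>x\<in>N. node_factor x (x \<in> A)) * (\<Prod>l\<in>L. e l)"
    proof (cases "(\<Prod>x\<in>N. node_factor x (x \<in> A)) = 0")
      case False
      with \<open>A \<in> Pow N\<close> have "P \<inter> N \<subseteq> A" "Q \<inter> A = {}"
        using node_factor_nonzero by auto
      with \<open>A \<in> Pow N\<close> show ?thesis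
        unfolding e_def by (simp add: leaf_factor_sum cong: prod.cong)
    qed simp
  qed
  also have "\<dots> = (\<Prod>x\<in>N. e x) * (\<Prod>l\<in>L. e l)"
    by (simp add: sum_distrib_right[symmetric] sum_Pow_prod_bool[OF finite_N] node_factor_sum e_def)
  also have "\<dots> = (\<Prod>x\<in>N \<union> L. e x)"
    using finite_N finite_L N_L_disjoint by (simp add: prod.union_disjoint)
  also have "\<dots> = (1/2) ^ card ((N \<union> L) \<inter> (P \<union> Q - fixed_leaves))"
    using fin unfolding e_def by (simp add: prod.If_cases Int_def)
  also have "(N \<union> L) \<inter> (P \<union> Q - fixed_leaves) = P \<union> Q - fixed_leaves"
    using P_Q_subset by blast
  finally show ?thesis .
qed

end

lemma tree_leaves_subset: "tree_leaves W t q \<subseteq> W"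
  unfolding tree_leaves_def by auto

lemma to_root_self: "x \<in> to_root q x"
  unfolding to_root_def by (auto intro: range_eqI[where x = 0])

lemma funpow_closed: "\<forall>x\<in>W. q x \<in> W \<Longrightarrow> x \<in> W \<Longrightarrow> (q ^^ k) x \<in> W"
  by (induction k) auto

lemma to_root_not_leaf:
  assumes "rooted_tree W t q" "x \<in> W" "v \<in> to_root q x" "v \<noteq> x"
  shows "v \<in> W" "v \<notin> tree_leaves W t q"
proof -
  obtain k where "v = (q ^^ k) x"
    using assms(3) unfolding to_root_def by blast
  with assms(4) obtain k' where "v = (q ^^ Suc k') x"
    by (cases k) auto
  define w where "w = (q ^^ k') x"
  have v: "v = q w"
    using \<open>v = (q ^^ Suc k') x\<close> unfolding w_def by simp
  have closed: "\<forall>y\<in>W. q y \<in> W" "t \<in> W" "q t = t"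
    using assms(1) unfolding rooted_tree_def by auto
  have "w \<in> W"
    unfolding w_def using funpow_closed[OF closed(1) assms(2)] .
  then show "v \<in> W"
    using v closed(1) by blast
  show "v \<notin> tree_leaves W t q"
  proof (cases "w = t")
    case True
    then show ?thesis
      using v closed(3) unfolding tree_leaves_def by simp
  next
    case False
    then have "w \<in> children W t q v"
      using \<open>w \<in> W\<close> v unfolding children_def by auto
    then show ?thesis
      unfolding tree_leaves_def by auto
  qed
qed

definition pos_vars :: "'v lit set \<Rightarrow> 'v set" where
  "pos_vars S = {x. (x, True) \<in> S}"

definition neg_vars :: "'v lit set \<Rightarrow> 'v set" where
  "neg_vars S = {x. (x, False) \<in> S}"

definition assignment :: "'v set \<Rightarrow> 'v set \<Rightarrow> 'v lit set" where
  "assignment X T = (\<lambda>x. (x, x \<in> T)) ` X"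

lemma mem_assignment_iff [simp]: "(x, b) \<in> assignment X T \<longleftrightarrow> x \<in> X \<and> b = (x \<in> T)"
  unfolding assignment_def by auto

lemma pos_vars_assignment: "pos_vars (assignment X T) = X \<inter> T"
  unfolding pos_vars_def by auto

lemma neg_vars_assignment: "neg_vars (assignment X T) = X - T"
  unfolding neg_vars_def by auto

lemma inj_on_assignment: "inj_on (assignment X) (Pow X)"
  by (rule inj_on_inverseI[where g = pos_vars]) (auto simp: pos_vars_assignment)

lemma complete_consistent_eq_assignment:
  "{S'. consistent S' \<and> fst ` S' = X} = assignment X ` Pow X"
proof (intro equalityI subsetI)
  fix S' assume "S' \<in> {S'. consistent S' \<and> fst ` S' = X}"
  then have cons: "consistent S'" and X: "fst ` S' = X"
    by auto
  have "(x, b) \<in> S' \<longleftrightarrow> (x, b) \<in> assignment X (pos_vars S')" for x b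
  proof
    assume "(x, b) \<in> S'"
    moreover from this have "x \<in> X"
      using X by force
    ultimately show "(x, b) \<in> assignment X (pos_vars S')"
      using cons unfolding consistent_def pos_vars_def by (cases b) auto
  next
    assume "(x, b) \<in> assignment X (pos_vars S')"
    then have "x \<in> X" "b \<longleftrightarrow> (x, True) \<in> S'"
      unfolding pos_vars_def by auto
    moreover obtain b' where "(x, b') \<in> S'"
      using \<open>x \<in> X\<close> X by force
    ultimately show "(x, b) \<in> S'"
      by (cases b; cases b') auto
  qed
  then have "S' = assignment X (pos_vars S')"
    by (simp add: set_eq_iff)
  moreover have "pos_vars S' \<subseteq> X"
    using X unfolding pos_vars_def by force
  ultimately show "S' \<in> assignment X ` Pow X"
    by blast
next
  fix S' assume "S' \<in> assignment X ` Pow X"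
  then show "S' \<in> {S'. consistent S' \<and> fst ` S' = X}"
    unfolding consistent_def assignment_def by (auto simp: image_image)
qed

lemma subset_assignment_iff:
  assumes "fst ` S \<subseteq> X"
  shows "S \<subseteq> assignment X T \<longleftrightarrow> pos_vars S \<subseteq> T \<and> neg_vars S \<inter> T = {}"
proof
  assume "S \<subseteq> assignment X T"
  then show "pos_vars S \<subseteq> T \<and> neg_vars S \<inter> T = {}"
    unfolding pos_vars_def neg_vars_def by auto
next
  assume T: "pos_vars S \<subseteq> T \<and> neg_vars S \<inter> T = {}"
  show "S \<subseteq> assignment X T"
  proof (rule subsetI)
    fix y assume "y \<in> S"
    moreover obtain x b where "y = (x, b)"
      by fastforce
    moreover from calculation have "x \<in> X"
      using assms by force
    ultimately show "y \<in> assignment X T"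
      using T unfolding pos_vars_def neg_vars_def by (cases b) auto
  qed
qed

lemma card_Diff_pos_lits:
  assumes "consistent S" "F \<subseteq> pos_vars S"
  shows "card (S - (\<lambda>x. (x, True)) ` F) = card (pos_vars S \<union> neg_vars S - F)"
proof -
  have "inj_on fst S"
    using assms(1) unfolding consistent_def by (intro inj_onI) (metis (full_types) prod.collapse)
  then have "card (S - (\<lambda>x. (x, True)) ` F) = card (fst ` (S - (\<lambda>x. (x, True)) ` F))"
    by (simp add: card_image inj_on_diff)
  also have "fst ` (S - (\<lambda>x. (x, True)) ` F) = pos_vars S \<union> neg_vars S - F"
  proof (intro equalityI subsetI)
    fix x assume "x \<in> fst ` (S - (\<lambda>x. (x, True)) ` F)"
    then obtain b where "(x, b) \<in> S" "(x, b) \<notin> (\<lambda>x. (x, True)) ` F"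
      by force
    then show "x \<in> pos_vars S \<union> neg_vars S - F"
      using assms unfolding consistent_def pos_vars_def neg_vars_def by (cases b) auto
  next
    fix x assume x: "x \<in> pos_vars S \<union> neg_vars S - F"
    then obtain b where "(x, b) \<in> S"
      unfolding pos_vars_def neg_vars_def by blast
    moreover have "(x, b) \<notin> (\<lambda>x. (x, True)) ` F"
      using x by auto
    ultimately show "x \<in> fst ` (S - (\<lambda>x. (x, True)) ` F)"
      by (intro image_eqI[where x = "(x, b)"]) auto
  qed
  finally show ?thesis .
qed

locale binary_tree_based_graph =
  fixes m :: nat and V :: "nat \<Rightarrow> 'v set" and r :: "nat \<Rightarrow> 'v" and p :: "nat \<Rightarrow> 'v \<Rightarrow> 'v"
  assumes btbg: "btbg m V r p"
begin

abbreviation leaves :: "nat \<Rightarrow> 'v set" where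
  "leaves i \<equiv> tree_leaves (V i) (r i) (p i)"

lemma rooted_tree: "i < m \<Longrightarrow> rooted_tree (V i) (r i) (p i)"
  using btbg unfolding btbg_def by blast

lemma card_trees_with_leaf: "i < m \<Longrightarrow> x \<in> leaves i \<Longrightarrow> card {j. j < m \<and> x \<in> leaves j} = 2"
  using btbg unfolding btbg_def by blast

lemma shared_vertices:
  "i < m \<Longrightarrow> j < m \<Longrightarrow> i \<noteq> j \<Longrightarrow> card (V i \<inter> V j) \<le> 1 \<and> V i \<inter> V j \<subseteq> leaves i \<inter> leaves j"
  using btbg unfolding btbg_def by blast

lemma finite_VH: "finite (VH m V)"
  using rooted_tree unfolding VH_def rooted_tree_def by auto

lemma common_leaf:
  assumes "adjacent m V r p i j"
  shows "V i \<inter> V j = {common_leaf V i j}" "common_leaf V i j \<in> leaves i \<inter> leaves j"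
proof -
  have ij: "i < m" "j < m" "i \<noteq> j"
    using assms unfolding adjacent_def by auto
  obtain l where l: "l \<in> leaves i \<inter> leaves j"
    using assms unfolding adjacent_def by auto
  then have "l \<in> V i \<inter> V j"
    using tree_leaves_subset by fast
  moreover have "finite (V i \<inter> V j)"
    using rooted_tree[OF ij(1)] unfolding rooted_tree_def by auto
  moreover have "\<forall>a\<in>V i \<inter> V j. \<forall>b\<in>V i \<inter> V j. a = b"
    using shared_vertices[OF ij] card_le_Suc0_iff_eq[OF \<open>finite (V i \<inter> V j)\<close>] by simp
  ultimately have "V i \<inter> V j = {l}"
    by blast
  moreover from this have "common_leaf V i j = l"
    unfolding common_leaf_def by simp
  ultimately show "V i \<inter> V j = {common_leaf V i j}" "common_leaf V i j \<in> leaves i \<inter> leaves j"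
    using l by simp_all
qed

definition leaf_vars :: "'v set" where
  "leaf_vars = (\<Union>k<m. leaves k)"

lemma leaf_vars_subset: "leaf_vars \<subseteq> VH m V"
  unfolding leaf_vars_def VH_def using tree_leaves_subset by fast

lemma common_leaf_in_leaf_vars: "adjacent m V r p i j \<Longrightarrow> common_leaf V i j \<in> leaf_vars"
  using common_leaf(2) unfolding leaf_vars_def adjacent_def by blast

lemma leaf_var_is_common_leaf:
  assumes "l \<in> leaf_vars"
  obtains i j where "adjacent m V r p i j" "common_leaf V i j = l"
proof -
  obtain k where k: "k < m" "l \<in> leaves k"
    using assms unfolding leaf_vars_def by blast
  define J where "J = {j. j < m \<and> l \<in> leaves j}"
  have "card J = 2" "k \<in> J"
    using card_trees_with_leaf[OF k] k unfolding J_def by auto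
  then have "card (J - {k}) = 1"
    by simp
  then obtain j where "J - {k} = {j}"
    by (auto simp: card_1_singleton_iff)
  then have j: "j \<in> J" "j \<noteq> k"
    by auto
  then have adj: "adjacent m V r p k j"
    using k unfolding J_def adjacent_def by auto
  have "l \<in> V k \<inter> V j"
    using k j tree_leaves_subset unfolding J_def by fast
  then have "common_leaf V k j = l"
    using common_leaf(1)[OF adj] by auto
  with adj show ?thesis
    by (rule that)
qed

lemma adjacent_pair_unique:
  assumes "adjacent m V r p i j" "adjacent m V r p i' j'" "common_leaf V i j = common_leaf V i' j'"
  shows "{i, j} = {i', j'}"
proof -
  define l where "l = common_leaf V i j"
  define J where "J = {k. k < m \<and> l \<in> leaves k}"
  have ij: "i < m" "i \<noteq> j" "i' \<noteq> j'"
    using assms(1,2) unfolding adjacent_def by auto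
  have "{i, j} \<subseteq> J" "{i', j'} \<subseteq> J"
    using common_leaf(2)[OF assms(1)] common_leaf(2)[OF assms(2)] assms(1,2,3)
    unfolding J_def l_def adjacent_def by auto
  moreover have "card J = 2"
    using card_trees_with_leaf[OF ij(1)] common_leaf(2)[OF assms(1)] unfolding J_def l_def by blast
  moreover have "finite J"
    unfolding J_def by auto
  ultimately have "{i, j} = J" "{i', j'} = J"
    using ij by (simp_all add: card_subset_eq)
  then show ?thesis
    by simp
qed

lemma clause_vars_determined_by_leaf:
  assumes "adjacent m V r p i j" "adjacent m V r p i' j'" "common_leaf V i j = common_leaf V i' j'"
  shows "clause_vars V p i j = clause_vars V p i' j'"
proof -
  have swap: "clause_vars V p j i = clause_vars V p i j"
    unfolding clause_vars_def common_leaf_def by (auto simp: Int_commute)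
  show ?thesis
    using adjacent_pair_unique[OF assms] swap by (auto simp: doubleton_eq_iff)
qed

lemma common_leaf_in_clause_vars: "common_leaf V i j \<in> clause_vars V p i j"
  unfolding clause_vars_def using to_root_self by fast

lemma clause_vars_nonleaf:
  assumes "adjacent m V r p i j"
  shows "clause_vars V p i j - {common_leaf V i j} \<subseteq> VH m V - leaf_vars"
proof
  fix v assume v: "v \<in> clause_vars V p i j - {common_leaf V i j}"
  define l where "l = common_leaf V i j"
  obtain k where k: "k \<in> {i, j}" "v \<in> to_root (p k) l"
    using v unfolding clause_vars_def l_def by auto
  have "k < m"
    using k(1) assms unfolding adjacent_def by auto
  moreover have "l \<in> V k"
    using k(1) common_leaf(2)[OF assms] tree_leaves_subset unfolding l_def by fast
  ultimately have vk: "v \<in> V k" "v \<notin> leaves k"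
    using to_root_not_leaf[OF rooted_tree _ k(2)] v unfolding l_def by auto
  have "v \<notin> leaves k'" if "k' < m" for k'
  proof (cases "k' = k")
    case False
    then show ?thesis
      using shared_vertices[OF \<open>k < m\<close> that] vk tree_leaves_subset by fast
  qed (use vk in simp)
  then show "v \<in> VH m V - leaf_vars"
    using vk \<open>k < m\<close> unfolding VH_def leaf_vars_def by blast
qed

text \<open>By \<open>clause_vars_determined_by_leaf\<close> the union ranges over a single clause.\<close>

definition nonleaf_vars :: "'v \<Rightarrow> 'v set" where
  "nonleaf_vars l = \<Union>{clause_vars V p i j - {l} | i j. adjacent m V r p i j \<and> common_leaf V i j = l}"

lemma nonleaf_vars_common_leaf:
  assumes "adjacent m V r p i j"
  shows "nonleaf_vars (common_leaf V i j) = clause_vars V p i j - {common_leaf V i j}"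
proof -
  let ?l = "common_leaf V i j"
  have "{clause_vars V p i' j' - {?l} | i' j'. adjacent m V r p i' j' \<and> common_leaf V i' j' = ?l}
      = {clause_vars V p i j - {?l}}"
  proof (intro equalityI subsetI)
    fix X assume "X \<in> {clause_vars V p i' j' - {?l} | i' j'. adjacent m V r p i' j' \<and> common_leaf V i' j' = ?l}"
    then obtain i' j' where "X = clause_vars V p i' j' - {?l}" "adjacent m V r p i' j'" "common_leaf V i' j' = ?l"
      by blast
    then show "X \<in> {clause_vars V p i j - {?l}}"
      using clause_vars_determined_by_leaf[OF assms] by simp
  qed (use assms in blast)
  then show ?thesis
    unfolding nonleaf_vars_def by simp
qed

lemma clause_vars_eq_insert_nonleaf_vars:
  "adjacent m V r p i j \<Longrightarrow> clause_vars V p i j = insert (common_leaf V i j) (nonleaf_vars (common_leaf V i j))"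
  by (simp add: nonleaf_vars_common_leaf insert_absorb common_leaf_in_clause_vars)

lemma nonleaf_vars_subset:
  assumes "l \<in> leaf_vars"
  shows "nonleaf_vars l \<subseteq> VH m V - leaf_vars"
proof -
  obtain i j where "adjacent m V r p i j" "common_leaf V i j = l"
    using assms by (rule leaf_var_is_common_leaf)
  then show ?thesis
    using clause_vars_nonleaf nonleaf_vars_common_leaf by metis
qed

lemma clause_satisfied_iff:
  assumes "adjacent m V r p i j"
  shows "(\<exists>v\<in>clause_vars V p i j. (v, True) \<in> assignment (VH m V) T)
    \<longleftrightarrow> common_leaf V i j \<in> T \<or> nonleaf_vars (common_leaf V i j) \<inter> T \<noteq> {}"
proof -
  have "clause_vars V p i j \<subseteq> VH m V"
    unfolding clause_vars_eq_insert_nonleaf_vars[OF assms]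
    using nonleaf_vars_subset[OF common_leaf_in_leaf_vars[OF assms]] common_leaf_in_leaf_vars[OF assms]
      leaf_vars_subset by blast
  then have "(\<exists>v\<in>clause_vars V p i j. (v, True) \<in> assignment (VH m V) T) \<longleftrightarrow> clause_vars V p i j \<inter> T \<noteq> {}"
    by auto
  also have "\<dots> \<longleftrightarrow> common_leaf V i j \<in> T \<or> nonleaf_vars (common_leaf V i j) \<inter> T \<noteq> {}"
    unfolding clause_vars_eq_insert_nonleaf_vars[OF assms] by blast
  finally show ?thesis .
qed

lemma SAT_eq:
  "SAT m V r p = assignment (VH m V) ` {T \<in> Pow (VH m V). \<forall>l\<in>leaf_vars. l \<in> T \<or> nonleaf_vars l \<inter> T \<noteq> {}}"
proof -
  define sat where
    "sat S' \<longleftrightarrow> (\<forall>i j. adjacent m V r p i j \<longrightarrow> (\<exists>v\<in>clause_vars V p i j. (v, True) \<in> S'))" for S'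
  have sat_assignment: "sat (assignment (VH m V) T) \<longleftrightarrow> (\<forall>l\<in>leaf_vars. l \<in> T \<or> nonleaf_vars l \<inter> T \<noteq> {})"
    for T
  proof
    assume sat: "sat (assignment (VH m V) T)"
    show "\<forall>l\<in>leaf_vars. l \<in> T \<or> nonleaf_vars l \<inter> T \<noteq> {}"
    proof
      fix l assume "l \<in> leaf_vars"
      then obtain i j where adj: "adjacent m V r p i j" and "common_leaf V i j = l"
        by (rule leaf_var_is_common_leaf)
      then show "l \<in> T \<or> nonleaf_vars l \<inter> T \<noteq> {}"
        using sat clause_satisfied_iff[OF adj] unfolding sat_def by blast
    qed
  next
    assume "\<forall>l\<in>leaf_vars. l \<in> T \<or> nonleaf_vars l \<inter> T \<noteq> {}"
    then show "sat (assignment (VH m V) T)"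
      unfolding sat_def using clause_satisfied_iff common_leaf_in_leaf_vars by blast
  qed
  have "SAT m V r p = {S' \<in> {S'. consistent S' \<and> fst ` S' = VH m V}. sat S'}"
    unfolding SAT_def sat_def by auto
  also have "\<dots> = {S' \<in> assignment (VH m V) ` Pow (VH m V). sat S'}"
    by (simp only: complete_consistent_eq_assignment)
  also have "\<dots> = assignment (VH m V) ` {T \<in> Pow (VH m V). sat (assignment (VH m V) T)}"
    by (rule Compr_image_eq)
  finally show ?thesis
    by (simp only: sat_assignment)
qed

lemma Fix_eq:
  "Fix m V r p S = (\<lambda>l. (l, True)) ` {l \<in> leaf_vars. l \<in> pos_vars S \<and> nonleaf_vars l \<subseteq> neg_vars S}"
proof (intro equalityI subsetI)
  fix y assume "y \<in> Fix m V r p S"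
  then obtain i j where "y = (common_leaf V i j, True)" "adjacent m V r p i j" "(common_leaf V i j, True) \<in> S"
    "\<forall>v \<in> clause_vars V p i j - {common_leaf V i j}. (v, False) \<in> S"
    unfolding Fix_def by blast
  then show "y \<in> (\<lambda>l. (l, True)) ` {l \<in> leaf_vars. l \<in> pos_vars S \<and> nonleaf_vars l \<subseteq> neg_vars S}"
    using common_leaf_in_leaf_vars nonleaf_vars_common_leaf unfolding pos_vars_def neg_vars_def by auto
next
  fix y assume "y \<in> (\<lambda>l. (l, True)) ` {l \<in> leaf_vars. l \<in> pos_vars S \<and> nonleaf_vars l \<subseteq> neg_vars S}"
  then obtain l where l: "y = (l, True)" "l \<in> leaf_vars" "(l, True) \<in> S" "\<forall>v\<in>nonleaf_vars l. (v, False) \<in> S"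
    unfolding pos_vars_def neg_vars_def by auto
  obtain i j where "adjacent m V r p i j" "common_leaf V i j = l"
    using l(2) by (rule leaf_var_is_common_leaf)
  then show "y \<in> Fix m V r p S"
    using l nonleaf_vars_common_leaf unfolding Fix_def by fastforce
qed

lemma guarded_leaf:
  assumes "guarded m V r p S" "l \<in> leaf_vars"
  shows "(l \<notin> pos_vars S \<and> l \<notin> neg_vars S) \<or> nonleaf_vars l \<inter> pos_vars S \<noteq> {}
    \<or> (l \<in> pos_vars S \<and> nonleaf_vars l \<subseteq> neg_vars S)"
proof -
  obtain i j where adj: "adjacent m V r p i j" and l: "common_leaf V i j = l"
    using assms(2) by (rule leaf_var_is_common_leaf)
  then have "\<not> occurs l S \<or> (\<exists>v \<in> clause_vars V p i j - {l}. (v, True) \<in> S)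
      \<or> ((l, True) \<in> S \<and> (\<forall>v \<in> clause_vars V p i j - {l}. (v, False) \<in> S))"
    using assms(1) unfolding guarded_def Let_def by blast
  moreover have "clause_vars V p i j - {l} = nonleaf_vars l"
    using nonleaf_vars_common_leaf[OF adj] l by simp
  ultimately show ?thesis
    unfolding occurs_def pos_vars_def neg_vars_def by blast
qed

lemma EC_eq:
  assumes "fst ` S \<subseteq> VH m V"
  shows "EC m V r p S = assignment (VH m V) `
    {T. T \<subseteq> VH m V \<and> pos_vars S \<subseteq> T \<and> neg_vars S \<inter> T = {} \<and> (\<forall>l\<in>leaf_vars. l \<in> T \<or> nonleaf_vars l \<inter> T \<noteq> {})}"
proof -
  have "EC m V r p S = assignment (VH m V) ` {T \<in> {T \<in> Pow (VH m V). \<forall>l\<in>leaf_vars. l \<in> T \<or> nonleaf_vars l \<inter> T \<noteq> {}}.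
      S \<subseteq> assignment (VH m V) T}"
    unfolding EC_def SAT_eq by (rule Compr_image_eq)
  also have "{T \<in> {T \<in> Pow (VH m V). \<forall>l\<in>leaf_vars. l \<in> T \<or> nonleaf_vars l \<inter> T \<noteq> {}}. S \<subseteq> assignment (VH m V) T}
      = {T. T \<subseteq> VH m V \<and> pos_vars S \<subseteq> T \<and> neg_vars S \<inter> T = {} \<and> (\<forall>l\<in>leaf_vars. l \<in> T \<or> nonleaf_vars l \<inter> T \<noteq> {})}"
    unfolding subset_assignment_iff[OF assms] by blast
  finally show ?thesis .
qed

lemma prob_assignment:
  assumes "T \<subseteq> VH m V"
  shows "prob m V r p (assignment (VH m V) T) = (1/2) ^ card (VH m V - {l \<in> leaf_vars. l \<in> T \<and> nonleaf_vars l \<inter> T = {}})"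
proof -
  have "l \<in> T \<longleftrightarrow> l \<in> VH m V \<inter> T" "nonleaf_vars l \<subseteq> VH m V - T \<longleftrightarrow> nonleaf_vars l \<inter> T = {}"
    if "l \<in> leaf_vars" for l
    using that assms leaf_vars_subset nonleaf_vars_subset[OF that] by blast+
  then have "{x. (x, True) \<in> Fix m V r p (assignment (VH m V) T)} = {l \<in> leaf_vars. l \<in> T \<and> nonleaf_vars l \<inter> T = {}}"
    unfolding Fix_eq pos_vars_assignment neg_vars_assignment by auto
  then show ?thesis
    unfolding prob_def by simp
qed

theorem Pr_EC_guarded:
  assumes cons: "consistent S" and vars: "fst ` S \<subseteq> VH m V" and guard: "guarded m V r p S"
  shows "Pr m V r p (EC m V r p S) = (1/2) ^ card (S - Fix m V r p S)"
proof -
  interpret leaf_clauses "VH m V - leaf_vars" leaf_vars nonleaf_vars "pos_vars S" "neg_vars S"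
  proof
    show "finite (VH m V - leaf_vars)" "finite leaf_vars"
      using finite_VH leaf_vars_subset finite_subset by auto
    show "pos_vars S \<inter> neg_vars S = {}"
      using cons unfolding consistent_def pos_vars_def neg_vars_def by blast
    show "pos_vars S \<union> neg_vars S \<subseteq> VH m V - leaf_vars \<union> leaf_vars"
      using vars unfolding pos_vars_def neg_vars_def by force
  qed (use nonleaf_vars_subset guarded_leaf[OF guard] in auto)
  have VH: "VH m V - leaf_vars \<union> leaf_vars = VH m V"
    using leaf_vars_subset by blast
  have EC: "EC m V r p S = assignment (VH m V) ` Collect admissible"
    unfolding EC_eq[OF vars] admissible_def VH ..
  have "Pr m V r p (EC m V r p S) = (\<Sum>T | admissible T. prob m V r p (assignment (VH m V) T))"
    unfolding Pr_def EC
    by (rule sum.reindex[OF inj_on_subset[OF inj_on_assignment], unfolded comp_def])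
      (auto simp: admissible_def Un_absorb2[OF leaf_vars_subset])
  also have "\<dots> = (\<Sum>T | admissible T. (1/2) ^ card (VH m V - leaf_vars \<union> leaf_vars - forced T))"
  proof (rule sum.cong[OF refl])
    fix T assume "T \<in> Collect admissible"
    then have "T \<subseteq> VH m V"
      unfolding admissible_def VH by blast
    then show "prob m V r p (assignment (VH m V) T) = (1/2) ^ card (VH m V - leaf_vars \<union> leaf_vars - forced T)"
      unfolding prob_assignment[OF \<open>T \<subseteq> VH m V\<close>] VH forced_def by simp
  qed
  also have "\<dots> = (1/2) ^ card (pos_vars S \<union> neg_vars S - fixed_leaves)"
    by (rule sum_admissible_weights)
  also have "card (pos_vars S \<union> neg_vars S - fixed_leaves) = card (S - Fix m V r p S)"
    unfolding Fix_eq fixed_leaves_def by (rule card_Diff_pos_lits[OF cons, symmetric]) blast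
  finally show ?thesis .
qed

end

theorem lemma14:
  fixes m :: nat and V :: "nat \<Rightarrow> 'v set" and r :: "nat \<Rightarrow> 'v" and p :: "nat \<Rightarrow> 'v \<Rightarrow> 'v"
    and S :: "'v lit set"
  assumes "btbg m V r p"
    and "consistent S" and "fst ` S \<subseteq> VH m V"
    and "guarded m V r p S"
  shows "Pr m V r p (EC m V r p S) = (1/2) ^ card (S - Fix m V r p S)"
  using binary_tree_based_graph.Pr_EC_guarded[OF binary_tree_based_graph.intro[OF assms(1)] assms(2-4)] .

end
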